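(* Let $N\ge1$. Consider elastic $N$-soliton solutions of KPII, each described by the set $\{[e_n,g_n]\}_{n=1}^N$ of distinct index pairs with $e_n<g_n$, where $e_1,\dots,e_N$ are the pivot columns and $g_1,\dots,g_N$ the non-pivot columns of its $N\times 2N$ coefficient matrix $A$ (so $\{e_n\}\sqcup\{g_n\}=\{1,\dots,2N\}$). Then: (i) With the pivots ordered as $e_1<e_2<\dots<e_N$, one has $e_1=1$, $e_N<2N$, and $n\le e_n\le 2n-1$ for each $n=1,\dots,N$; the number of possible choices of the pivot set is the Catalan number $C_N=\frac{(2N)!}{N!\,(N+1)!}$. (ii) For a fixed ordered pivot set $\{e_1<\dots<e_N\}$, the number of possible (unordered) choices of non-pivot indices $\{g_1,\dots,g_N\}$ paired with the pivots such that $e_n<g_n$ for all $n$ is $\prod_{n=1}^N(2n-e_n)$. (iii) The total number of ways of choosing the $N$ distinct pairs $\{[e_n,g_n]\}_{n=1}^N$ (partitioning $\{1,\dots,2N\}$) is $(2N-1)!!$.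
   Context: Setting: $k_1<\dots<k_{2N}$ real, $\theta_m=k_mx+k_m^2y+k_m^3t+\theta_{0m}$, $A$ a real $N\times 2N$ matrix in reduced row-echelon form of rank $N$, all nonzero $N\times N$ minors positive, every column having a nonzero entry and every row having a nonzero entry besides its pivot, and satisfying the duality condition $A(m_1,\dots,m_N)=0\iff A(l_1,\dots,l_N)=0$ for every disjoint partition $\{m_i\}\sqcup\{l_i\}=\{1,\dots,2N\}$ (here $A(m_1,\dots,m_N)$ is the minor on those columns). The $\tau$-function is $\tau=\sum_{m_1<\dots<m_N}A(m_1,\dots,m_N)e^{\theta_{m_1}+\dots+\theta_{m_N}}\prod_{s<r}(k_{m_r}-k_{m_s})$, and $u=2(\log\tau)_{xx}$ solves KPII $(-4u_t+u_{xxx}+6uu_x)_x+3u_{yy}=0$; such $u$ are the elastic $N$-soliton solutions. Each such solution has $N$ asymptotic line solitons as $y\to\pm\infty$ labeled by the pairs $[e_n,g_n]$, i.e. localized near the lines $\theta_{e_n}=\theta_{g_n}$ with amplitude $k_{g_n}-k_{e_n}$ and direction $k_{g_n}+k_{e_n}$. *)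

theory Defs
  imports "HOL-Analysis.Analysis"
begin

text \<open>Coefficient matrices are real N x 2N matrices given as functions
  nat => nat => real, rows indexed by 1..N, columns by 1..2N (1-based as in the paper).\<close>

definition minor :: "nat \<Rightarrow> (nat \<Rightarrow> nat \<Rightarrow> real) \<Rightarrow> nat set \<Rightarrow> real" where
  "minor N A S = (\<Sum>p | p permutes {1..N}.
      of_int (sign p) * (\<Prod>i\<in>{1..N}. A i (sorted_list_of_set S ! (p i - 1))))"

definition pivot_col :: "nat \<Rightarrow> (nat \<Rightarrow> nat \<Rightarrow> real) \<Rightarrow> nat \<Rightarrow> nat" where
  "pivot_col N A i = (LEAST j. 1 \<le> j \<and> j \<le> 2*N \<and> A i j \<noteq> 0)"

definition rref_rank :: "nat \<Rightarrow> (nat \<Rightarrow> nat \<Rightarrow> real) \<Rightarrow> bool" where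
  "rref_rank N A \<longleftrightarrow>
     (\<forall>i\<in>{1..N}. \<exists>j\<in>{1..2*N}. A i j \<noteq> 0) \<and>
     (\<forall>i\<in>{1..N}. \<forall>i'\<in>{1..N}. i < i' \<longrightarrow> pivot_col N A i < pivot_col N A i') \<and>
     (\<forall>i\<in>{1..N}. A i (pivot_col N A i) = 1) \<and>
     (\<forall>i\<in>{1..N}. \<forall>k\<in>{1..N}. k \<noteq> i \<longrightarrow> A k (pivot_col N A i) = 0)"

definition pivot_set :: "nat \<Rightarrow> (nat \<Rightarrow> nat \<Rightarrow> real) \<Rightarrow> nat set" where
  "pivot_set N A = pivot_col N A ` {1..N}"

definition elastic_soliton_matrix :: "nat \<Rightarrow> (nat \<Rightarrow> nat \<Rightarrow> real) \<Rightarrow> bool" where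
  "elastic_soliton_matrix N A \<longleftrightarrow>
     rref_rank N A \<and>
     (\<forall>S. S \<subseteq> {1..2*N} \<and> card S = N \<longrightarrow> minor N A S \<noteq> 0 \<longrightarrow> minor N A S > 0) \<and>
     (\<forall>j\<in>{1..2*N}. \<exists>i\<in>{1..N}. A i j \<noteq> 0) \<and>
     (\<forall>i\<in>{1..N}. \<exists>j\<in>{1..2*N}. j \<noteq> pivot_col N A i \<and> A i j \<noteq> 0) \<and>
     (\<forall>S. S \<subseteq> {1..2*N} \<and> card S = N \<longrightarrow>
          (minor N A S = 0 \<longleftrightarrow> minor N A ({1..2*N} - S) = 0))"

definition nth_elem :: "nat set \<Rightarrow> nat \<Rightarrow> nat" where
  "nth_elem E n = sorted_list_of_set E ! (n - 1)"

definition possible_pivot_sets :: "nat \<Rightarrow> nat set set" where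
  "possible_pivot_sets N = {E. E \<subseteq> {1..2*N} \<and> card E = N \<and>
      (\<forall>n\<in>{1..N}. n \<le> nth_elem E n \<and> nth_elem E n \<le> 2*n - 1)}"

definition pairings_for :: "nat \<Rightarrow> nat set \<Rightarrow> (nat \<times> nat) set set" where
  "pairings_for N E = {P. P \<subseteq> E \<times> ({1..2*N} - E) \<and>
      (\<forall>e\<in>E. \<exists>!g. (e, g) \<in> P) \<and>
      (\<forall>g\<in>{1..2*N} - E. \<exists>!e. (e, g) \<in> P) \<and>
      (\<forall>(e, g)\<in>P. e < g)}"

definition all_pairings :: "nat \<Rightarrow> (nat \<times> nat) set set" where
  "all_pairings N = {P. (\<forall>(e, g)\<in>P. e < g \<and> e \<in> {1..2*N} \<and> g \<in> {1..2*N}) \<and>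
      (\<forall>x\<in>{1..2*N}. \<exists>!p. p \<in> P \<and> (x = fst p \<or> x = snd p))}"

definition odd_double_fact :: "nat \<Rightarrow> nat" where
  "odd_double_fact N = (\<Prod>k\<in>{1..N}. 2*k - 1)"

end

theory Submission
  imports Defs
begin

text \<open>
  (i) In reduced row-echelon form, rows \<open>n, \<dots>, N\<close> vanish to the left of the \<open>n\<close>-th pivot
  \<open>e\<^sub>n\<close>, so every choice of \<open>N\<close> columns with at least \<open>n\<close> of them left of \<open>e\<^sub>n\<close> has a
  vanishing minor. The minor on the pivot columns is \<open>1\<close>, so by duality the minor on the
  non-pivot columns is nonzero; as \<open>e\<^sub>n - n\<close> non-pivot columns lie left of \<open>e\<^sub>n\<close>, this forces
  \<open>e\<^sub>n \<le> 2n - 1\<close>. The sets with \<open>n \<le> e\<^sub>n \<le> 2n - 1\<close> are the ballot sets (every prefix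
  \<open>{1..m}\<close> contains at least \<open>m/2\<close> of their elements). The number \<open>B(L,k)\<close> of ballot
  \<open>k\<close>-subsets of \<open>{1..L}\<close> satisfies Pascal's recursion, as does \<open>C(L,k) - C(L,k+1)\<close>,
  and the two agree at the boundary; for \<open>L = 2N, k = N\<close> this difference is the Catalan
  number.

  (ii) Matching the pivots to larger non-pivots from the largest pivot downwards, \<open>e\<^sub>n\<close> has
  \<open>2N - e\<^sub>n - (N - n)\<close> larger non-pivots, of which the \<open>N - n\<close> larger pivots already use
  \<open>N - n\<close>; this leaves \<open>2n - e\<^sub>n\<close> choices.

  (iii) In a pairing of \<open>2k\<close> points, the largest point is paired with one of the other
  \<open>2k - 1\<close>, and the rest is a pairing of \<open>2k - 2\<close> points; hence \<open>(2k - 1)!!\<close>.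
\<close>

section \<open>Order statistics of finite sets of naturals\<close>

lemma card_image_strict_mono_on_le:
  fixes f :: "'a::linorder \<Rightarrow> 'b::linorder"
  assumes "strict_mono_on A f" "a \<in> A"
  shows "card {y \<in> f ` A. y \<le> f a} = card {x \<in> A. x \<le> a}"
    and "card {y \<in> f ` A. y < f a} = card {x \<in> A. x < a}"
proof -
  have inj: "inj_on f B" if "B \<subseteq> A" for B
    using strict_mono_on_imp_inj_on[OF assms(1)] that by (rule inj_on_subset)
  have "{y \<in> f ` A. y \<le> f a} = f ` {x \<in> A. x \<le> a}"
    and "{y \<in> f ` A. y < f a} = f ` {x \<in> A. x < a}"
    using assms by (auto simp: strict_mono_on_less_eq strict_mono_on_less)
  then show "card {y \<in> f ` A. y \<le> f a} = card {x \<in> A. x \<le> a}"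
    and "card {y \<in> f ` A. y < f a} = card {x \<in> A. x < a}"
    by (simp_all add: card_image inj)
qed

lemma bij_betw_nth_elem:
  assumes "finite E"
  shows "bij_betw (nth_elem E) {1..card E} E"
proof -
  have "bij_betw (\<lambda>n. n - 1) {1..card E} {..<card E}"
    by (rule bij_betw_byWitness[where f' = Suc]) auto
  moreover have "bij_betw ((!) (sorted_list_of_set E)) {..<card E} E"
    using assms by (intro bij_betw_nth) auto
  ultimately have "bij_betw ((!) (sorted_list_of_set E) \<circ> (\<lambda>n. n - 1)) {1..card E} E"
    by (rule bij_betw_trans)
  then show ?thesis
    unfolding nth_elem_def[abs_def] comp_def .
qed

lemma nth_elem_image: "finite E \<Longrightarrow> nth_elem E ` {1..card E} = E"
  using bij_betw_nth_elem bij_betw_imp_surj_on by blast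

lemma nth_elem_mem: "finite E \<Longrightarrow> n \<in> {1..card E} \<Longrightarrow> nth_elem E n \<in> E"
  using nth_elem_image by blast

lemma strict_mono_on_nth_elem:
  assumes "finite E"
  shows "strict_mono_on {1..card E} (nth_elem E)"
proof (rule strict_mono_onI)
  fix m n assume "m \<in> {1..card E}" "n \<in> {1..card E}" "m < n"
  then show "nth_elem E m < nth_elem E n"
    using sorted_wrt_nth_less[OF strict_sorted_list_of_set, of "m - 1" "n - 1" E] assms
    by (simp add: nth_elem_def)
qed

lemma card_le_nth_elem:
  assumes "finite E" "n \<in> {1..card E}"
  shows "card {x \<in> E. x \<le> nth_elem E n} = n"
proof -
  have "{x \<in> {1..card E}. x \<le> n} = {1..n}"
    using assms(2) by auto
  then show ?thesis
    using card_image_strict_mono_on_le(1)[OF strict_mono_on_nth_elem[OF assms(1)] assms(2)]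
    unfolding nth_elem_image[OF assms(1)] by simp
qed

lemma card_less_nth_elem:
  assumes "finite E" "n \<in> {1..card E}"
  shows "card {x \<in> E. x < nth_elem E n} = n - 1"
proof -
  have "{x \<in> {1..card E}. x < n} = {1..<n}"
    using assms(2) by auto
  then show ?thesis
    using card_image_strict_mono_on_le(2)[OF strict_mono_on_nth_elem[OF assms(1)] assms(2)]
    unfolding nth_elem_image[OF assms(1)] by simp
qed

lemma card_greater_nth_elem:
  assumes "finite E" "n \<in> {1..card E}"
  shows "card {x \<in> E. nth_elem E n < x} = card E - n"
proof -
  have "{x \<in> E. nth_elem E n < x} = E - {x \<in> E. x \<le> nth_elem E n}"
    by auto
  then show ?thesis
    using assms by (simp add: card_Diff_subset card_le_nth_elem)
qed

lemma nth_elem_le_iff: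
  assumes "finite E" "n \<in> {1..card E}"
  shows "nth_elem E n \<le> a \<longleftrightarrow> n \<le> card {x \<in> E. x \<le> a}"
proof
  assume "nth_elem E n \<le> a"
  then have "card {x \<in> E. x \<le> nth_elem E n} \<le> card {x \<in> E. x \<le> a}"
    using assms(1) by (intro card_mono) auto
  then show "n \<le> card {x \<in> E. x \<le> a}"
    by (simp add: card_le_nth_elem[OF assms])
next
  assume n_le: "n \<le> card {x \<in> E. x \<le> a}"
  show "nth_elem E n \<le> a"
  proof (rule ccontr)
    assume "\<not> nth_elem E n \<le> a"
    then have "card {x \<in> E. x \<le> a} \<le> card {x \<in> E. x < nth_elem E n}"
      using assms(1) by (intro card_mono) auto
    moreover have "card {x \<in> E. x < nth_elem E n} = n - 1"
      by (rule card_less_nth_elem[OF assms])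
    ultimately show False
      using n_le assms(2) by (metis atLeastAtMost_iff diff_less le_trans less_one not_le)
  qed
qed

lemma nth_elem_less_iff:
  assumes "finite E" "n \<in> {1..card E}"
  shows "nth_elem E n < a \<longleftrightarrow> n \<le> card {x \<in> E. x < a}"
proof (cases a)
  case (Suc b)
  have "{x \<in> E. x < Suc b} = {x \<in> E. x \<le> b}"
    by auto
  then show ?thesis
    using nth_elem_le_iff[OF assms, of b] Suc by (simp add: less_Suc_eq_le)
qed (use assms in simp)

lemma nth_elem_eqI:
  assumes "finite E" "x \<in> E" "card {y \<in> E. y \<le> x} = n"
  shows "nth_elem E n = x"
proof -
  obtain m where "m \<in> {1..card E}" "x = nth_elem E m"
    using nth_elem_image[OF assms(1)] assms(2) by blast
  then show ?thesis
    using card_le_nth_elem[OF assms(1)] assms(3) by simp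
qed

lemma index_le_nth_elem:
  assumes "finite E" "0 \<notin> E" "n \<in> {1..card E}"
  shows "n \<le> nth_elem E n"
proof -
  have "{x \<in> E. x \<le> nth_elem E n} \<subseteq> {1..nth_elem E n}"
    using assms(2) by (auto simp: Suc_le_eq intro: gr0I)
  then have "card {x \<in> E. x \<le> nth_elem E n} \<le> nth_elem E n"
    using card_mono[of "{1..nth_elem E n}"] by fastforce
  then show ?thesis
    by (simp add: card_le_nth_elem[OF assms(1,3)])
qed

lemma nth_elem_image_strict_mono_on:
  assumes "strict_mono_on {1..N} f" "n \<in> {1..N}"
  shows "nth_elem (f ` {1..N}) n = f n"
proof (rule nth_elem_eqI)
  have "{x \<in> {1..N}. x \<le> n} = {1..n}"
    using assms(2) by auto
  then show "card {y \<in> f ` {1..N}. y \<le> f n} = n"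
    using card_image_strict_mono_on_le(1)[OF assms] by simp
qed (use assms(2) in auto)

lemma prod_nth_elem:
  "finite E \<Longrightarrow> (\<Prod>n\<in>{1..card E}. h (nth_elem E n)) = (\<Prod>e\<in>E. h e)"
  using prod.reindex_bij_betw[OF bij_betw_nth_elem] by blast

lemma card_less_nth_elem_complement:
  assumes "E \<subseteq> {1..L}" "n \<in> {1..card E}"
  shows "card {g \<in> {1..L} - E. g < nth_elem E n} = nth_elem E n - n"
proof -
  let ?e = "nth_elem E n"
  have fin: "finite E"
    using assms(1) finite_subset by blast
  have "?e \<in> {1..L}"
    using nth_elem_mem[OF fin assms(2)] assms(1) by blast
  then have "{g \<in> {1..L} - E. g < ?e} = {1..<?e} - {x \<in> E. x < ?e}"
    by auto
  moreover have "{x \<in> E. x < ?e} \<subseteq> {1..<?e}"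
    using assms(1) by auto
  ultimately have "card {g \<in> {1..L} - E. g < ?e} = (?e - 1) - (n - 1)"
    using card_less_nth_elem[OF fin assms(2)] by (simp add: card_Diff_subset fin)
  then show ?thesis
    using \<open>?e \<in> {1..L}\<close> assms(2) by simp
qed

lemma card_greater_nth_elem_complement:
  assumes "E \<subseteq> {1..L}" "n \<in> {1..card E}"
  shows "card {g \<in> {1..L} - E. nth_elem E n < g} = (L - nth_elem E n) - (card E - n)"
proof -
  let ?e = "nth_elem E n"
  have fin: "finite E"
    using assms(1) finite_subset by blast
  have "?e \<in> {1..L}"
    using nth_elem_mem[OF fin assms(2)] assms(1) by blast
  then have "{g \<in> {1..L} - E. ?e < g} = {?e<..L} - {x \<in> E. ?e < x}"
    by auto
  moreover have "{x \<in> E. ?e < x} \<subseteq> {?e<..L}"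
    using assms(1) by auto
  ultimately show ?thesis
    using card_greater_nth_elem[OF fin assms(2)] by (simp add: card_Diff_subset fin)
qed

section \<open>Perfect pairings\<close>

lemma card_UN_insert_image:
  assumes "finite S" "inj_on k S" "\<And>s. s \<in> S \<Longrightarrow> finite (F s)"
    and "\<And>s s' Q. s \<in> S \<Longrightarrow> s' \<in> S \<Longrightarrow> Q \<in> F s \<Longrightarrow> k s' \<notin> Q"
  shows "card (\<Union>s\<in>S. insert (k s) ` F s) = (\<Sum>s\<in>S. card (F s))"
proof -
  have inj: "inj_on (insert (k s)) (F s)" if "s \<in> S" for s
    using assms(4)[OF that that] by (intro inj_onI) (metis insert_ident)
  have "insert (k s) ` F s \<inter> insert (k s') ` F s' = {}"
    if "s \<in> S" "s' \<in> S" "s \<noteq> s'" for s s'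
  proof -
    have "k s \<noteq> k s'"
      using assms(2) that by (auto dest: inj_onD)
    then show ?thesis
      using assms(4)[OF that(2) that(1)] by blast
  qed
  then have "card (\<Union>s\<in>S. insert (k s) ` F s) = (\<Sum>s\<in>S. card (insert (k s) ` F s))"
    using assms(1,3) by (intro card_UN_disjoint) auto
  also have "\<dots> = (\<Sum>s\<in>S. card (F s))"
    using inj by (intro sum.cong) (auto intro: card_image)
  finally show ?thesis .
qed

definition perfect_pairings :: "'a::linorder set \<Rightarrow> ('a \<times> 'a) set set" where
  "perfect_pairings X = {P. (\<forall>(e, g)\<in>P. e < g \<and> e \<in> X \<and> g \<in> X) \<and>
      (\<forall>x\<in>X. \<exists>!p. p \<in> P \<and> (x = fst p \<or> x = snd p))}"

lemma perfect_pairingsD: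
  assumes "P \<in> perfect_pairings X"
  shows "\<And>p. p \<in> P \<Longrightarrow> fst p < snd p \<and> fst p \<in> X \<and> snd p \<in> X"
    and "\<And>x. x \<in> X \<Longrightarrow> \<exists>p\<in>P. x = fst p \<or> x = snd p"
    and "\<And>p q x. \<lbrakk>p \<in> P; q \<in> P; x = fst p \<or> x = snd p; x = fst q \<or> x = snd q\<rbrakk> \<Longrightarrow> p = q"
proof -
  show pair: "fst p < snd p \<and> fst p \<in> X \<and> snd p \<in> X" if "p \<in> P" for p
    using assms that unfolding perfect_pairings_def by (auto simp: case_prod_beta)
  show "\<exists>p\<in>P. x = fst p \<or> x = snd p" if "x \<in> X" for x
    using assms that unfolding perfect_pairings_def by blast
  show "p = q" if "p \<in> P" "q \<in> P" "x = fst p \<or> x = snd p" "x = fst q \<or> x = snd q" for p q x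
  proof -
    have "x \<in> X"
      using pair[OF that(1)] that(3) by auto
    then have "\<exists>!p. p \<in> P \<and> (x = fst p \<or> x = snd p)"
      using assms unfolding perfect_pairings_def by blast
    then show ?thesis
      using that by blast
  qed
qed

lemma perfect_pairingsI:
  assumes "\<And>p. p \<in> P \<Longrightarrow> fst p < snd p \<and> fst p \<in> X \<and> snd p \<in> X"
    and "\<And>x. x \<in> X \<Longrightarrow> \<exists>p\<in>P. x = fst p \<or> x = snd p"
    and "\<And>p q x. \<lbrakk>p \<in> P; q \<in> P; x = fst p \<or> x = snd p; x = fst q \<or> x = snd q\<rbrakk> \<Longrightarrow> p = q"
  shows "P \<in> perfect_pairings X"
  unfolding perfect_pairings_def
proof (intro CollectI conjI ballI)
  fix p assume "p \<in> P"
  then show "case p of (e, g) \<Rightarrow> e < g \<and> e \<in> X \<and> g \<in> X"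
    using assms(1) by (simp add: case_prod_beta)
next
  fix x assume "x \<in> X"
  then obtain p where "p \<in> P" "x = fst p \<or> x = snd p"
    using assms(2) by blast
  then show "\<exists>!p. p \<in> P \<and> (x = fst p \<or> x = snd p)"
    using assms(3) by blast
qed

lemma perfect_pairings_remove:
  assumes "P \<in> perfect_pairings X" "(a, b) \<in> P"
  shows "P - {(a, b)} \<in> perfect_pairings (X - {a, b})"
proof (rule perfect_pairingsI)
  note pair = perfect_pairingsD(1)[OF assms(1)]
    and unique = perfect_pairingsD(3)[OF assms(1)]
  fix p assume p: "p \<in> P - {(a, b)}"
  have "fst p \<notin> {a, b} \<and> snd p \<notin> {a, b}"
    using p unique[of p "(a, b)" a] unique[of p "(a, b)" b] assms(2) by auto
  then show "fst p < snd p \<and> fst p \<in> X - {a, b} \<and> snd p \<in> X - {a, b}"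
    using pair p by auto
next
  fix x assume "x \<in> X - {a, b}"
  then show "\<exists>p\<in>P - {(a, b)}. x = fst p \<or> x = snd p"
    using perfect_pairingsD(2)[OF assms(1), of x] by auto
qed (use perfect_pairingsD(3)[OF assms(1)] in blast)

lemma perfect_pairings_insert:
  assumes "Q \<in> perfect_pairings (X - {a, b})" "a < b" "a \<in> X" "b \<in> X"
  shows "insert (a, b) Q \<in> perfect_pairings X"
proof (rule perfect_pairingsI)
  note pair = perfect_pairingsD(1)[OF assms(1)]
  show "fst p < snd p \<and> fst p \<in> X \<and> snd p \<in> X" if "p \<in> insert (a, b) Q" for p
    using that pair[of p] assms(2-) by auto
  show "\<exists>p\<in>insert (a, b) Q. x = fst p \<or> x = snd p" if "x \<in> X" for x
    using that perfect_pairingsD(2)[OF assms(1), of x] by auto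
  show "p = q"
    if "p \<in> insert (a, b) Q" "q \<in> insert (a, b) Q" "x = fst p \<or> x = snd p" "x = fst q \<or> x = snd q"
    for p q x
    using that pair[of p] pair[of q] perfect_pairingsD(3)[OF assms(1), of p q x] by auto
qed

lemma finite_perfect_pairings: "finite X \<Longrightarrow> finite (perfect_pairings X)"
proof (rule finite_subset)
  show "perfect_pairings X \<subseteq> Pow (X \<times> X)"
    by (auto dest: perfect_pairingsD(1) simp: mem_Times_iff)
qed simp

lemma perfect_pairings_Max:
  assumes "finite X" "X \<noteq> {}"
  shows "perfect_pairings X =
    (\<Union>a\<in>X - {Max X}. insert (a, Max X) ` perfect_pairings (X - {a, Max X}))"
    (is "_ = ?R")
proof
  let ?m = "Max X"
  show "perfect_pairings X \<subseteq> ?R"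
  proof
    fix P assume P: "P \<in> perfect_pairings X"
    obtain p where p: "p \<in> P" "?m = fst p \<or> ?m = snd p"
      using perfect_pairingsD(2)[OF P] Max_in[OF assms] by blast
    have p_pair: "fst p < snd p" "fst p \<in> X" "snd p \<in> X"
      using perfect_pairingsD(1)[OF P p(1)] by auto
    then have "snd p = ?m"
      using p(2) Max_ge[OF assms(1), of "snd p"] by auto
    then obtain a where a: "(a, ?m) \<in> P" "a \<in> X - {?m}"
      using p(1) p_pair by (metis Diff_iff less_irrefl prod.collapse singletonD)
    then have "P - {(a, ?m)} \<in> perfect_pairings (X - {a, ?m})"
      using perfect_pairings_remove[OF P] by blast
    moreover have "P = insert (a, ?m) (P - {(a, ?m)})"
      using a(1) by blast
    ultimately show "P \<in> ?R"
      using a(2) by blast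
  qed
  show "?R \<subseteq> perfect_pairings X"
  proof
    fix P assume "P \<in> ?R"
    then obtain a Q where "a \<in> X - {?m}" "Q \<in> perfect_pairings (X - {a, ?m})" "P = insert (a, ?m) Q"
      by blast
    moreover have "a < ?m"
      using calculation(1) Max_ge[OF assms(1)] by (auto simp: order.order_iff_strict)
    ultimately show "P \<in> perfect_pairings X"
      using perfect_pairings_insert Max_in[OF assms] by blast
  qed
qed

lemma card_perfect_pairings_Max:
  assumes "finite X" "X \<noteq> {}"
  shows "card (perfect_pairings X) =
    (\<Sum>a\<in>X - {Max X}. card (perfect_pairings (X - {a, Max X})))"
  unfolding perfect_pairings_Max[OF assms]
proof (rule card_UN_insert_image)
  show "inj_on (\<lambda>a. (a, Max X)) (X - {Max X})"
    by (auto intro: inj_onI)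
  show "finite (perfect_pairings (X - {a, Max X}))" for a
    using assms(1) by (simp add: finite_perfect_pairings)
  show "(a', Max X) \<notin> Q" if "Q \<in> perfect_pairings (X - {a, Max X})" for a a' Q
    using perfect_pairingsD(1)[OF that, of "(a', Max X)"] by auto
qed (use assms(1) in simp)

lemma card_perfect_pairings:
  "finite X \<Longrightarrow> card X = 2 * k \<Longrightarrow> card (perfect_pairings X) = odd_double_fact k"
proof (induction k arbitrary: X)
  case 0
  then have "perfect_pairings X = {{}}"
    by (auto simp: perfect_pairings_def)
  then show ?case
    by (simp add: odd_double_fact_def)
next
  case (Suc k)
  let ?m = "Max X"
  have ne: "X \<noteq> {}"
    using Suc.prems by auto
  then have m: "?m \<in> X"
    using Suc.prems(1) by simp
  have "card (perfect_pairings X) = (\<Sum>a\<in>X - {?m}. card (perfect_pairings (X - {a, ?m})))"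
    by (rule card_perfect_pairings_Max[OF Suc.prems(1) ne])
  also have "\<dots> = (\<Sum>a\<in>X - {?m}. odd_double_fact k)"
    using Suc.prems m by (intro sum.cong refl Suc.IH) (auto simp: card_Diff_subset)
  also have "\<dots> = (2 * k + 1) * odd_double_fact k"
    using Suc.prems m by simp
  finally show ?case
    by (simp add: odd_double_fact_def)
qed

lemma all_pairings_eq: "all_pairings N = perfect_pairings {1..2*N}"
  unfolding all_pairings_def perfect_pairings_def by simp

section \<open>Increasing matchings\<close>

definition increasing_matchings :: "'a::linorder set \<Rightarrow> 'a set \<Rightarrow> ('a \<times> 'a) set set" where
  "increasing_matchings E G = {P. P \<subseteq> E \<times> G \<and>
      (\<forall>e\<in>E. \<exists>!g. (e, g) \<in> P) \<and>
      (\<forall>g\<in>G. \<exists>!e. (e, g) \<in> P) \<and>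
      (\<forall>(e, g)\<in>P. e < g)}"

lemma finite_increasing_matchings:
  "finite E \<Longrightarrow> finite G \<Longrightarrow> finite (increasing_matchings E G)"
  by (rule finite_subset[of _ "Pow (E \<times> G)"]) (auto simp: increasing_matchings_def)

lemma increasing_matchings_remove:
  assumes "P \<in> increasing_matchings E G" "(e, g) \<in> P"
  shows "P - {(e, g)} \<in> increasing_matchings (E - {e}) (G - {g})"
proof -
  have sub: "P \<subseteq> E \<times> G" and lt: "\<forall>(e, g)\<in>P. e < g"
    and ue: "\<And>e. e \<in> E \<Longrightarrow> \<exists>!g. (e, g) \<in> P" and ug: "\<And>g. g \<in> G \<Longrightarrow> \<exists>!e. (e, g) \<in> P"
    using assms(1) unfolding increasing_matchings_def by auto
  have "e \<in> E" "g \<in> G"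
    using sub assms(2) by auto
  then have "P - {(e, g)} \<subseteq> (E - {e}) \<times> (G - {g})"
    using sub assms(2) ue ug by blast
  moreover have "\<exists>!y. (x, y) \<in> P - {(e, g)}" if "x \<in> E - {e}" for x
    using ue[of x] that by auto
  moreover have "\<exists>!x. (x, y) \<in> P - {(e, g)}" if "y \<in> G - {g}" for y
    using ug[of y] that by auto
  ultimately show ?thesis
    using lt unfolding increasing_matchings_def by auto
qed

lemma increasing_matchings_insert:
  assumes "Q \<in> increasing_matchings (E - {e}) (G - {g})" "e \<in> E" "g \<in> G" "e < g"
  shows "insert (e, g) Q \<in> increasing_matchings E G"
proof -
  have sub: "Q \<subseteq> (E - {e}) \<times> (G - {g})" and lt: "\<forall>(e, g)\<in>Q. e < g"
    and ue: "\<And>x. x \<in> E - {e} \<Longrightarrow> \<exists>!y. (x, y) \<in> Q"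
    and ug: "\<And>y. y \<in> G - {g} \<Longrightarrow> \<exists>!x. (x, y) \<in> Q"
    using assms(1) unfolding increasing_matchings_def by auto
  have "\<exists>!y. (x, y) \<in> insert (e, g) Q" if "x \<in> E" for x
    using ue[of x] sub that by (cases "x = e") auto
  moreover have "\<exists>!x. (x, y) \<in> insert (e, g) Q" if "y \<in> G" for y
    using ug[of y] sub that by (cases "y = g") auto
  ultimately show ?thesis
    using sub lt assms(2-) unfolding increasing_matchings_def by auto
qed

lemma increasing_matchings_Max:
  assumes "finite E" "E \<noteq> {}"
  shows "increasing_matchings E G =
    (\<Union>g\<in>{g\<in>G. Max E < g}. insert (Max E, g) ` increasing_matchings (E - {Max E}) (G - {g}))"
    (is "_ = ?R")
proof
  let ?m = "Max E"
  show "increasing_matchings E G \<subseteq> ?R"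
  proof
    fix P assume P: "P \<in> increasing_matchings E G"
    obtain g where g: "(?m, g) \<in> P"
      using P Max_in[OF assms] unfolding increasing_matchings_def by blast
    then have "g \<in> {g\<in>G. ?m < g}"
      using P unfolding increasing_matchings_def by auto
    moreover have "P - {(?m, g)} \<in> increasing_matchings (E - {?m}) (G - {g})"
      using increasing_matchings_remove[OF P g] .
    moreover have "P = insert (?m, g) (P - {(?m, g)})"
      using g by blast
    ultimately show "P \<in> ?R"
      by blast
  qed
  show "?R \<subseteq> increasing_matchings E G"
    using increasing_matchings_insert Max_in[OF assms] by blast
qed

lemma card_increasing_matchings_Max:
  assumes "finite E" "finite G" "E \<noteq> {}"
  shows "card (increasing_matchings E G) =
    (\<Sum>g\<in>{g\<in>G. Max E < g}. card (increasing_matchings (E - {Max E}) (G - {g})))"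
  unfolding increasing_matchings_Max[OF assms(1,3)]
proof (rule card_UN_insert_image)
  show "inj_on (Pair (Max E)) {g\<in>G. Max E < g}"
    by (auto intro: inj_onI)
  show "finite (increasing_matchings (E - {Max E}) (G - {g}))" for g
    using assms(1,2) by (simp add: finite_increasing_matchings)
  show "(Max E, g') \<notin> Q" if "Q \<in> increasing_matchings (E - {Max E}) (G - {g})" for g g' Q
    using that by (auto simp: increasing_matchings_def)
qed (use assms(2) in simp)

lemma card_increasing_matchings:
  "finite E \<Longrightarrow> finite G \<Longrightarrow> card E = k \<Longrightarrow> card G = k \<Longrightarrow>
   card (increasing_matchings E G) = (\<Prod>e\<in>E. card {g\<in>G. e < g} - card {e'\<in>E. e < e'})"
proof (induction k arbitrary: E G)
  case 0
  then have "increasing_matchings E G = {{}}"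
    by (auto simp: increasing_matchings_def)
  then show ?case
    using 0 by simp
next
  case (Suc k)
  let ?m = "Max E"
  let ?f = "\<lambda>e. card {g\<in>G. e < g} - card {e'\<in>E. e < e'}"
  have ne: "E \<noteq> {}"
    using Suc.prems by auto
  then have m: "?m \<in> E" and m_max: "\<And>e. e \<in> E \<Longrightarrow> e \<le> ?m"
    using Suc.prems(1) by auto
  have IH: "card (increasing_matchings (E - {?m}) (G - {g})) = (\<Prod>e\<in>E - {?m}. ?f e)"
    if g: "g \<in> {g\<in>G. ?m < g}" for g
  proof -
    have "card (increasing_matchings (E - {?m}) (G - {g})) =
        (\<Prod>e\<in>E - {?m}. card {g'\<in>G - {g}. e < g'} - card {e'\<in>E - {?m}. e < e'})"
      using Suc.IH[of "E - {?m}" "G - {g}"] Suc.prems m g by simp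
    also have "\<dots> = (\<Prod>e\<in>E - {?m}. ?f e)"
    proof (rule prod.cong[OF refl])
      fix e assume "e \<in> E - {?m}"
      then have "e < ?m"
        using m_max by (auto simp: order.order_iff_strict)
      then have "{g'\<in>G. e < g'} = insert g {g'\<in>G - {g}. e < g'}"
        and "{e'\<in>E. e < e'} = insert ?m {e'\<in>E - {?m}. e < e'}"
        using g m by auto
      then show "card {g'\<in>G - {g}. e < g'} - card {e'\<in>E - {?m}. e < e'} = ?f e"
        using Suc.prems(1,2) by simp
    qed
    finally show ?thesis .
  qed
  have "{e'\<in>E. ?m < e'} = {}"
    using m_max leD by blast
  then have "card {g\<in>G. ?m < g} = ?f ?m"
    by (simp only: card.empty diff_zero)
  moreover have "card (increasing_matchings E G) = card {g\<in>G. ?m < g} * (\<Prod>e\<in>E - {?m}. ?f e)"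
    using card_increasing_matchings_Max[OF Suc.prems(1,2) ne] IH by simp
  ultimately show ?case
    using prod.remove[OF Suc.prems(1) m, of ?f] by simp
qed

lemma card_pairings_for:
  assumes "E \<in> possible_pivot_sets N"
  shows "card (pairings_for N E) = (\<Prod>n\<in>{1..N}. 2*n - nth_elem E n)"
proof -
  have sub: "E \<subseteq> {1..2*N}" and card: "card E = N"
    and upper: "\<And>n. n \<in> {1..N} \<Longrightarrow> nth_elem E n \<le> 2*n - 1"
    using assms unfolding possible_pivot_sets_def by auto
  have fin: "finite E"
    using sub finite_subset by blast
  define G where "G = {1..2*N} - E"
  let ?f = "\<lambda>e. card {g \<in> G. e < g} - card {e' \<in> E. e < e'}"
  have "pairings_for N E = increasing_matchings E G"
    unfolding pairings_for_def increasing_matchings_def G_def by simp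
  moreover have "card G = N"
    unfolding G_def using sub card fin by (simp add: card_Diff_subset)
  ultimately have "card (pairings_for N E) = (\<Prod>e\<in>E. ?f e)"
    using card_increasing_matchings[OF fin _ card] unfolding G_def by simp
  also have "\<dots> = (\<Prod>n\<in>{1..N}. ?f (nth_elem E n))"
    using prod_nth_elem[OF fin, of ?f] card by simp
  also have "\<dots> = (\<Prod>n\<in>{1..N}. 2*n - nth_elem E n)"
  proof (rule prod.cong[OF refl])
    fix n assume n: "n \<in> {1..N}"
    have "card {g \<in> G. nth_elem E n < g} = (2*N - nth_elem E n) - (N - n)"
      using card_greater_nth_elem_complement[OF sub] n card unfolding G_def by simp
    moreover have "card {e' \<in> E. nth_elem E n < e'} = N - n"
      using card_greater_nth_elem[OF fin] n card by simp
    ultimately show "?f (nth_elem E n) = 2*n - nth_elem E n"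
      using upper[OF n] n by simp
  qed
  finally show ?thesis .
qed

section \<open>Ballot sets\<close>

definition ballot_sets :: "nat \<Rightarrow> nat \<Rightarrow> nat set set" where
  "ballot_sets L k = {E. E \<subseteq> {1..L} \<and> card E = k \<and> (\<forall>m\<in>{1..L}. m \<le> 2 * card {x \<in> E. x \<le> m})}"

lemma finite_ballot_sets: "finite (ballot_sets L k)"
  by (rule finite_subset[of _ "Pow {1..L}"]) (auto simp: ballot_sets_def)

lemma ballot_condition_iff_nth_elem_le:
  assumes "E \<subseteq> {1..2*N}" "card E = N"
  shows "(\<forall>m\<in>{1..2*N}. m \<le> 2 * card {x \<in> E. x \<le> m}) \<longleftrightarrow>
    (\<forall>n\<in>{1..N}. nth_elem E n \<le> 2*n - 1)"
proof -
  have fin: "finite E"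
    using assms(1) finite_subset by blast
  show ?thesis
  proof
    assume ballot: "\<forall>m\<in>{1..2*N}. m \<le> 2 * card {x \<in> E. x \<le> m}"
    show "\<forall>n\<in>{1..N}. nth_elem E n \<le> 2*n - 1"
    proof
      fix n assume n: "n \<in> {1..N}"
      then have "2*n - 1 \<in> {1..2*N}"
        by auto
      then have "2*n - 1 \<le> 2 * card {x \<in> E. x \<le> 2*n - 1}"
        using ballot by blast
      then have "n \<le> card {x \<in> E. x \<le> 2*n - 1}"
        by arith
      then show "nth_elem E n \<le> 2*n - 1"
        using nth_elem_le_iff[OF fin] n assms(2) by simp
    qed
  next
    assume upper: "\<forall>n\<in>{1..N}. nth_elem E n \<le> 2*n - 1"
    show "\<forall>m\<in>{1..2*N}. m \<le> 2 * card {x \<in> E. x \<le> m}"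
    proof (rule ballI, rule ccontr)
      fix m assume "m \<in> {1..2*N}" and "\<not> m \<le> 2 * card {x \<in> E. x \<le> m}"
      then have c: "Suc (card {x \<in> E. x \<le> m}) \<in> {1..card E}"
        and "2 * Suc (card {x \<in> E. x \<le> m}) - 1 \<le> m"
        using assms(2) by auto
      then have "nth_elem E (Suc (card {x \<in> E. x \<le> m})) \<le> m"
        using upper assms(2) by fastforce
      then show False
        using nth_elem_le_iff[OF fin c] by simp
    qed
  qed
qed

lemma possible_pivot_sets_eq_ballot_sets: "possible_pivot_sets N = ballot_sets (2*N) N"
proof -
  have "(\<forall>n\<in>{1..N}. n \<le> nth_elem E n \<and> nth_elem E n \<le> 2*n - 1) \<longleftrightarrow>
      (\<forall>m\<in>{1..2*N}. m \<le> 2 * card {x \<in> E. x \<le> m})"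
    if "E \<subseteq> {1..2*N}" "card E = N" for E
  proof -
    have "n \<le> nth_elem E n" if "n \<in> {1..N}" for n
      using index_le_nth_elem[of E n] \<open>E \<subseteq> {1..2*N}\<close> \<open>card E = N\<close> that
      by (force intro: finite_subset)
    then show ?thesis
      using ballot_condition_iff_nth_elem_le[OF that] by blast
  qed
  then show ?thesis
    unfolding possible_pivot_sets_def ballot_sets_def by blast
qed

lemma possible_pivot_sets_ends:
  assumes "E \<in> possible_pivot_sets N" "N \<ge> 1"
  shows "nth_elem E 1 = 1" and "nth_elem E N < 2*N"
proof -
  have bounds: "n \<le> nth_elem E n \<and> nth_elem E n \<le> 2*n - 1" if "n \<in> {1..N}" for n
    using assms(1) that unfolding possible_pivot_sets_def by blast
  show "nth_elem E 1 = 1"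
    using bounds[of 1] assms(2) by simp
  show "nth_elem E N < 2*N"
    using bounds[of N] assms(2) by auto
qed

lemma ballot_sets_empty: "2 * k < L \<Longrightarrow> ballot_sets L k = {}"
proof (rule ccontr)
  assume "2 * k < L" "ballot_sets L k \<noteq> {}"
  then obtain E where "E \<subseteq> {1..L}" "card E = k" "L \<le> 2 * card {x \<in> E. x \<le> L}"
    unfolding ballot_sets_def by auto
  moreover from this have "{x \<in> E. x \<le> L} = E"
    by auto
  ultimately show False
    using \<open>2 * k < L\<close> by simp
qed

lemma ballot_sets_Suc_iff:
  "E \<in> ballot_sets (Suc L) k \<longleftrightarrow>
    E \<subseteq> {1..Suc L} \<and> card E = k \<and> Suc L \<le> 2 * k \<and>
    (\<forall>m\<in>{1..L}. m \<le> 2 * card {x \<in> E. x \<le> m})"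
proof -
  have "{x \<in> E. x \<le> Suc L} = E" if "E \<subseteq> {1..Suc L}"
    using that by auto
  moreover have "{1..Suc L} = insert (Suc L) {1..L}"
    by auto
  ultimately show ?thesis
    unfolding ballot_sets_def by auto
qed

lemma ballot_sets_Suc_of_subset:
  assumes "E \<subseteq> {1..L}" "Suc L \<le> 2 * k"
  shows "E \<in> ballot_sets (Suc L) k \<longleftrightarrow> E \<in> ballot_sets L k"
  using assms unfolding ballot_sets_Suc_iff by (auto simp: ballot_sets_def)

lemma insert_in_ballot_sets_Suc_iff:
  assumes "E \<subseteq> {1..L}" "Suc L \<le> 2 * Suc k"
  shows "insert (Suc L) E \<in> ballot_sets (Suc L) (Suc k) \<longleftrightarrow> E \<in> ballot_sets L k"
proof -
  have "finite E" "Suc L \<notin> E"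
    using assms(1) by (auto intro: finite_subset)
  moreover have "{x \<in> insert (Suc L) E. x \<le> m} = {x \<in> E. x \<le> m}" if "m \<in> {1..L}" for m
    using that by auto
  ultimately show ?thesis
    using assms unfolding ballot_sets_Suc_iff by (auto simp: ballot_sets_def)
qed

lemma ballot_sets_Suc:
  assumes "Suc L \<le> 2 * Suc k"
  shows "ballot_sets (Suc L) (Suc k) = ballot_sets L (Suc k) \<union> insert (Suc L) ` ballot_sets L k"
proof -
  note kept = ballot_sets_Suc_of_subset[OF _ assms]
    and added = insert_in_ballot_sets_Suc_iff[OF _ assms]
  show ?thesis
  proof (intro set_eqI iffI)
    fix E assume E: "E \<in> ballot_sets (Suc L) (Suc k)"
    then have sub: "E - {Suc L} \<subseteq> {1..L}"
      by (auto simp: ballot_sets_Suc_iff le_Suc_eq)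
    show "E \<in> ballot_sets L (Suc k) \<union> insert (Suc L) ` ballot_sets L k"
    proof (cases "Suc L \<in> E")
      case True
      then have "E = insert (Suc L) (E - {Suc L})"
        by blast
      then show ?thesis
        using added[OF sub] E by (metis UnI2 imageI)
    next
      case False
      then show ?thesis
        using kept[of E] sub E by simp
    qed
  next
    fix E assume "E \<in> ballot_sets L (Suc k) \<union> insert (Suc L) ` ballot_sets L k"
    then show "E \<in> ballot_sets (Suc L) (Suc k)"
    proof
      assume E: "E \<in> ballot_sets L (Suc k)"
      then have "E \<subseteq> {1..L}"
        by (simp add: ballot_sets_def)
      then show ?thesis
        using kept E by blast
    next
      assume "E \<in> insert (Suc L) ` ballot_sets L k"
      then obtain E' where E': "E' \<in> ballot_sets L k" "E = insert (Suc L) E'"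
        by blast
      moreover from E' have "E' \<subseteq> {1..L}"
        by (simp add: ballot_sets_def)
      ultimately show ?thesis
        using added by blast
    qed
  qed
qed

lemma card_ballot_sets:
  "L \<le> 2 * k \<Longrightarrow> card (ballot_sets L k) + (L choose Suc k) = L choose k"
proof (induction L arbitrary: k)
  case 0
  have "ballot_sets 0 k = (if k = 0 then {{}} else {})"
    unfolding ballot_sets_def by auto
  then show ?case
    by simp
next
  case (Suc L)
  then obtain j where k: "k = Suc j"
    by (cases k) auto
  have "card (ballot_sets (Suc L) k) = card (ballot_sets L k) + card (ballot_sets L j)"
  proof -
    have "Suc L \<notin> E" if "E \<in> ballot_sets L j" for E
      using that unfolding ballot_sets_def by auto
    then have "inj_on (insert (Suc L)) (ballot_sets L j)"
      by (intro inj_onI) (metis insert_ident)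
    moreover have "ballot_sets L k \<inter> insert (Suc L) ` ballot_sets L j = {}"
      unfolding ballot_sets_def by auto
    ultimately show ?thesis
      using ballot_sets_Suc[of L j] Suc.prems k
      by (simp add: card_Un_disjoint finite_ballot_sets card_image)
  qed
  moreover have "card (ballot_sets L j) + (L choose k) = L choose j"
  proof (cases "L \<le> 2 * j")
    case True
    then show ?thesis
      using Suc.IH[of j] k by simp
  next
    case False
    then have "L = 2 * j + 1"
      using Suc.prems k by simp
    then show ?thesis
      using ballot_sets_empty[of j L] binomial_symmetric[of j L] k by simp
  qed
  ultimately show ?case
    using Suc.IH[of k] Suc.prems k by simp
qed

lemma binomial_diff_eq_catalan:
  assumes "N \<ge> 1"
  shows "real (2*N choose N) - real (2*N choose Suc N) = fact (2*N) / (fact N * fact (N+1))"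
proof -
  obtain M where N: "N = Suc M"
    using assms by (cases N) auto
  have "N * (2*N choose N) = Suc N * (2*N choose M)"
    using Suc_times_binomial_add[of M N] unfolding N[symmetric] by (simp only: N mult_2 add_Suc)
  also have "2*N choose M = 2*N choose Suc N"
    using binomial_symmetric[of M "2*N"] N by simp
  finally have "real (2*N choose Suc N) = real N / (real N + 1) * real (2*N choose N)"
    by (simp add: field_simps flip: of_nat_mult)
  then have "real (2*N choose N) - real (2*N choose Suc N) = real (2*N choose N) / (real N + 1)"
    by (simp add: field_simps)
  also have "\<dots> = fact (2*N) / (fact N * fact (N+1))"
    by (simp add: binomial_fact field_simps)
  finally show ?thesis .
qed

lemma card_possible_pivot_sets:
  assumes "N \<ge> 1"
  shows "real (card (possible_pivot_sets N)) = fact (2*N) / (fact N * fact (N+1))"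
proof -
  have "card (possible_pivot_sets N) + (2*N choose Suc N) = 2*N choose N"
    unfolding possible_pivot_sets_eq_ballot_sets by (rule card_ballot_sets) simp
  then have "real (card (possible_pivot_sets N)) = real (2*N choose N) - real (2*N choose Suc N)"
    by (simp flip: of_nat_add)
  then show ?thesis
    using binomial_diff_eq_catalan[OF assms] by simp
qed

section \<open>Pivots and minors\<close>

lemma pivot_col:
  assumes "\<exists>j\<in>{1..2*N}. A i j \<noteq> 0"
  shows "pivot_col N A i \<in> {1..2*N}"
    and "1 \<le> j \<Longrightarrow> j < pivot_col N A i \<Longrightarrow> A i j = 0"
proof -
  let ?P = "\<lambda>j. 1 \<le> j \<and> j \<le> 2*N \<and> A i j \<noteq> 0"
  have "?P (pivot_col N A i)"
    unfolding pivot_col_def by (rule LeastI_ex) (use assms in auto)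
  then show "pivot_col N A i \<in> {1..2*N}"
    by simp
  show "A i j = 0" if "1 \<le> j" "j < pivot_col N A i"
    using not_less_Least[of j ?P] that \<open>?P (pivot_col N A i)\<close>
    unfolding pivot_col_def by auto
qed

lemma strict_mono_on_pivot_col: "rref_rank N A \<Longrightarrow> strict_mono_on {1..N} (pivot_col N A)"
  unfolding rref_rank_def by (auto intro: strict_mono_onI)

lemma pivot_set_subset: "rref_rank N A \<Longrightarrow> pivot_set N A \<subseteq> {1..2*N}"
  unfolding pivot_set_def rref_rank_def using pivot_col(1) by blast

lemma card_pivot_set: "rref_rank N A \<Longrightarrow> card (pivot_set N A) = N"
  unfolding pivot_set_def
  using card_image[OF strict_mono_on_imp_inj_on[OF strict_mono_on_pivot_col]] by simp

lemma nth_elem_pivot_set: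
  "rref_rank N A \<Longrightarrow> n \<in> {1..N} \<Longrightarrow> nth_elem (pivot_set N A) n = pivot_col N A n"
  unfolding pivot_set_def by (rule nth_elem_image_strict_mono_on[OF strict_mono_on_pivot_col])

lemma minor_eq:
  "minor N A S = (\<Sum>p | p permutes {1..N}.
      of_int (sign p) * (\<Prod>i\<in>{1..N}. A i (nth_elem S (p i))))"
  by (simp add: minor_def nth_elem_def)

lemma minor_pivot_set:
  assumes "rref_rank N A"
  shows "minor N A (pivot_set N A) = 1"
proof -
  have summand: "of_int (sign p) * (\<Prod>i\<in>{1..N}. A i (nth_elem (pivot_set N A) (p i))) =
      (if p = id then 1 else 0)" if p: "p permutes {1..N}" for p
  proof -
    have "(\<Prod>i\<in>{1..N}. A i (nth_elem (pivot_set N A) (p i))) = (\<Prod>i\<in>{1..N}. A i (pivot_col N A (p i)))"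
      using nth_elem_pivot_set[OF assms] permutes_in_image[OF p] by (intro prod.cong) auto
    also have "\<dots> = (if p = id then 1 else 0)"
    proof (cases "p = id")
      case True
      then show ?thesis
        using assms unfolding rref_rank_def by simp
    next
      case False
      then obtain i where i: "i \<in> {1..N}" "p i \<noteq> i"
        using permutes_not_in[OF p] by (metis eq_id_iff)
      then have "A i (pivot_col N A (p i)) = 0"
        using assms permutes_in_image[OF p] unfolding rref_rank_def by auto
      then have "(\<Prod>i\<in>{1..N}. A i (pivot_col N A (p i))) = 0"
        by (intro prod_zero bexI[OF _ i(1)]) simp_all
      then show ?thesis
        using False by simp
    qed
    finally show ?thesis
      by simp
  qed
  have "minor N A (pivot_set N A) = (\<Sum>p | p permutes {1..N}. if p = id then 1 else 0)"
    unfolding minor_eq using summand by (intro sum.cong) auto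
  also have "\<dots> = 1"
    by (simp add: finite_permutations permutes_id)
  finally show ?thesis .
qed

lemma permutes_exists_le:
  fixes p :: "nat \<Rightarrow> nat"
  assumes "p permutes {1..N}" "n \<in> {1..N}"
  shows "\<exists>i\<in>{n..N}. p i \<le> n"
proof (rule ccontr)
  assume "\<not> (\<exists>i\<in>{n..N}. p i \<le> n)"
  then have "p ` {n..N} \<subseteq> {Suc n..N}"
    using permutes_in_image[OF assms(1)] assms(2) by (force simp: not_le Suc_le_eq)
  then have "card (p ` {n..N}) \<le> card {Suc n..N}"
    by (intro card_mono) auto
  moreover have "card (p ` {n..N}) = card {n..N}"
    using permutes_inj_on[OF assms(1)] by (rule card_image)
  ultimately show False
    using assms(2) by (simp add: Suc_diff_le)
qed

lemma minor_eq_0_if_columns_before_pivot: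
  assumes "rref_rank N A" "n \<in> {1..N}" "S \<subseteq> {1..2*N}" "card S = N"
    and "n \<le> card {x \<in> S. x < pivot_col N A n}"
  shows "minor N A S = 0"
  unfolding minor_eq
proof (rule sum.neutral, rule ballI)
  fix p assume "p \<in> {p. p permutes {1..N}}"
  then have p: "p permutes {1..N}"
    by simp
  obtain i where i: "i \<in> {n..N}" "p i \<le> n"
    using permutes_exists_le[OF p assms(2)] by blast
  have i_row: "i \<in> {1..N}"
    using i(1) assms(2) by simp
  then have pi: "p i \<in> {1..N}"
    by (rule permutes_in_image[OF p, THEN iffD2])
  have fin: "finite S"
    using assms(3) finite_subset by blast
  have "nth_elem S (p i) < pivot_col N A n"
    using nth_elem_less_iff[OF fin] pi i(2) assms(4,5) by simp
  moreover have "pivot_col N A n \<le> pivot_col N A i"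
    using strict_mono_on_leD[OF strict_mono_on_pivot_col[OF assms(1)] assms(2) i_row] i(1) by simp
  moreover have "nth_elem S (p i) \<in> S"
    using nth_elem_mem[OF fin] pi assms(4) by simp
  then have "1 \<le> nth_elem S (p i)"
    using assms(3) by auto
  moreover have "\<exists>j\<in>{1..2*N}. A i j \<noteq> 0"
    using assms(1) i_row unfolding rref_rank_def by blast
  ultimately have "A i (nth_elem S (p i)) = 0"
    using pivot_col(2) by (meson order_less_le_trans)
  then have "(\<Prod>i\<in>{1..N}. A i (nth_elem S (p i))) = 0"
    by (intro prod_zero bexI[OF _ i_row]) simp_all
  then show "of_int (sign p) * (\<Prod>i\<in>{1..N}. A i (nth_elem S (p i))) = 0"
    by simp
qed

lemma elastic_soliton_matrixD:
  assumes "elastic_soliton_matrix N A"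
  shows "rref_rank N A"
    and "S \<subseteq> {1..2*N} \<Longrightarrow> card S = N \<Longrightarrow>
      minor N A S = 0 \<longleftrightarrow> minor N A ({1..2*N} - S) = 0"
  using assms unfolding elastic_soliton_matrix_def by simp_all

lemma pivot_col_le:
  assumes "elastic_soliton_matrix N A" "n \<in> {1..N}"
  shows "pivot_col N A n \<le> 2*n - 1"
proof (rule ccontr)
  assume late: "\<not> pivot_col N A n \<le> 2*n - 1"
  let ?E = "pivot_set N A"
  define G where "G = {1..2*N} - ?E"
  have rr: "rref_rank N A"
    using assms(1) by (rule elastic_soliton_matrixD)
  have E_sub: "?E \<subseteq> {1..2*N}" and E_card: "card ?E = N"
    using pivot_set_subset[OF rr] card_pivot_set[OF rr] .
  have "minor N A G \<noteq> 0"
    using elastic_soliton_matrixD(2)[OF assms(1) E_sub E_card] minor_pivot_set[OF rr]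
    unfolding G_def by simp
  moreover have "G \<subseteq> {1..2*N}" and "card G = N"
    unfolding G_def using E_sub E_card by (auto simp: card_Diff_subset finite_subset)
  moreover have "n \<le> card {x \<in> G. x < pivot_col N A n}"
    using card_less_nth_elem_complement[OF E_sub, of n] nth_elem_pivot_set[OF rr assms(2)]
      E_card assms(2) late
    unfolding G_def by simp
  ultimately show False
    using minor_eq_0_if_columns_before_pivot[OF rr assms(2)] by blast
qed

lemma pivot_set_in_possible_pivot_sets:
  assumes "elastic_soliton_matrix N A"
  shows "pivot_set N A \<in> possible_pivot_sets N"
proof -
  have rr: "rref_rank N A"
    using assms by (rule elastic_soliton_matrixD)
  have sub: "pivot_set N A \<subseteq> {1..2*N}" and card: "card (pivot_set N A) = N"
    using pivot_set_subset[OF rr] card_pivot_set[OF rr] .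
  have "n \<le> nth_elem (pivot_set N A) n" if "n \<in> {1..N}" for n
    using index_le_nth_elem[of "pivot_set N A" n] sub card that by (force intro: finite_subset)
  moreover have "nth_elem (pivot_set N A) n \<le> 2*n - 1" if "n \<in> {1..N}" for n
    using pivot_col_le[OF assms that] nth_elem_pivot_set[OF rr that] by simp
  ultimately show ?thesis
    unfolding possible_pivot_sets_def using sub card by blast
qed

theorem proposition4:
  fixes N :: nat
  assumes "N \<ge> 1"
  shows
    "(\<forall>A. elastic_soliton_matrix N A \<longrightarrow>
        (let E = pivot_set N A in
           nth_elem E 1 = 1 \<and> nth_elem E N < 2*N \<and>
           (\<forall>n\<in>{1..N}. n \<le> nth_elem E n \<and> nth_elem E n \<le> 2*n - 1))) \<and>
     real (card (possible_pivot_sets N)) = fact (2*N) / (fact N * fact (N+1)) \<and>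
     (\<forall>E\<in>possible_pivot_sets N.
        card (pairings_for N E) = (\<Prod>n\<in>{1..N}. 2*n - nth_elem E n)) \<and>
     card (all_pairings N) = odd_double_fact N"
proof (intro conjI allI impI ballI)
  fix A assume "elastic_soliton_matrix N A"
  then have E: "pivot_set N A \<in> possible_pivot_sets N"
    by (rule pivot_set_in_possible_pivot_sets)
  then show "let E = pivot_set N A in
      nth_elem E 1 = 1 \<and> nth_elem E N < 2*N \<and>
      (\<forall>n\<in>{1..N}. n \<le> nth_elem E n \<and> nth_elem E n \<le> 2*n - 1)"
    using possible_pivot_sets_ends[OF E assms] unfolding possible_pivot_sets_def Let_def by blast
next
  show "real (card (possible_pivot_sets N)) = fact (2*N) / (fact N * fact (N+1))"
    using assms by (rule card_possible_pivot_sets)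
next
  fix E assume "E \<in> possible_pivot_sets N"
  then show "card (pairings_for N E) = (\<Prod>n\<in>{1..N}. 2*n - nth_elem E n)"
    by (rule card_pairings_for)
next
  show "card (all_pairings N) = odd_double_fact N"
    unfolding all_pairings_eq by (rule card_perfect_pairings) simp_all
qed

end
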